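(* Let $\mathcal P$ be a pre-Hahn-localizable family of probability measures on $(\Omega,\mathcal F)$ with a localization $\mathcal Q$ whose supports $\{S_Q\}_{Q\in\mathcal Q}$ are pairwise disjoint. Then for every $A\in\mathcal H_{\mathcal F}^{\mathcal Q}$ and every $Q\in\mathcal Q$ we have $A\cap S_Q\in\mathcal F$.
   Context: $\mathcal A\lll\mathcal B$ means every $A\in\mathcal A$ is absolutely continuous w.r.t. some $B\in\mathcal B$; $\mathrm{sconv}$ denotes countable convex combinations. $\mathcal P$ is pre-Hahn-localizable with localization $\mathcal Q$ (probability measures on $\mathcal F$) and supports $S_Q\in\mathcal F$ if $Q(S_R)=\delta_{QR}$ for $Q,R\in\mathcal Q$ and $\mathcal Q\lll\mathcal P\lll\mathrm{sconv}(\mathcal Q)$. The Hahn-extension is $\mathcal H_{\mathcal F}^{\mathcal Q}=\sigma\big(\mathcal F\cup\{\bigcup_{Q\in\mathcal Q}E_Q:E_Q\in\mathcal F,E_Q\subseteq S_Q\}\big)$. *)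

theory Defs
  imports "HOL-Probability.Probability"
begin

definition prob_on :: "'a set \<Rightarrow> 'a set set \<Rightarrow> 'a measure \<Rightarrow> bool" where
  "prob_on \<Omega> F M \<longleftrightarrow> prob_space M \<and> space M = \<Omega> \<and> sets M = F"

text \<open>calA <<< calB: every A in calA is absolutely continuous w.r.t. some B in calB
  (library: absolutely_continuous B A means null_sets B is contained in null_sets A).\<close>
definition lll :: "'a measure set \<Rightarrow> 'a measure set \<Rightarrow> bool" where
  "lll \<A> \<B> \<longleftrightarrow> (\<forall>A\<in>\<A>. \<exists>B\<in>\<B>. absolutely_continuous B A)"

definition sconv :: "'a set \<Rightarrow> 'a set set \<Rightarrow> 'a measure set \<Rightarrow> 'a measure set" where
  "sconv \<Omega> F \<Q> = {R. space R = \<Omega> \<and> sets R = F \<and>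
     (\<exists>(c::nat \<Rightarrow> real) q. (\<forall>n. 0 \<le> c n) \<and> c sums 1 \<and> (\<forall>n. q n \<in> \<Q>) \<and>
        (\<forall>A\<in>F. emeasure R A = (\<Sum>n. ennreal (c n) * emeasure (q n) A)))}"

definition localization ::
  "'a set \<Rightarrow> 'a set set \<Rightarrow> 'a measure set \<Rightarrow> 'a measure set \<Rightarrow> ('a measure \<Rightarrow> 'a set) \<Rightarrow> bool" where
  "localization \<Omega> F \<P> \<Q> S \<longleftrightarrow>
     (\<forall>Q\<in>\<Q>. prob_on \<Omega> F Q) \<and>
     (\<forall>Q\<in>\<Q>. S Q \<in> F) \<and>
     (\<forall>Q\<in>\<Q>. \<forall>R\<in>\<Q>. measure Q (S R) = (if Q = R then 1 else 0)) \<and>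
     lll \<Q> \<P> \<and> lll \<P> (sconv \<Omega> F \<Q>)"

definition pre_hahn_localizable :: "'a set \<Rightarrow> 'a set set \<Rightarrow> 'a measure set \<Rightarrow> bool" where
  "pre_hahn_localizable \<Omega> F \<P> \<longleftrightarrow> (\<exists>\<Q> S. localization \<Omega> F \<P> \<Q> S)"

definition hahn_extension ::
  "'a set \<Rightarrow> 'a set set \<Rightarrow> 'a measure set \<Rightarrow> ('a measure \<Rightarrow> 'a set) \<Rightarrow> 'a set set" where
  "hahn_extension \<Omega> F \<Q> S = sigma_sets \<Omega>
     (F \<union> {(\<Union>Q\<in>\<Q>. E Q) | E. \<forall>Q\<in>\<Q>. E Q \<in> F \<and> E Q \<subseteq> S Q})"

end

theory Submission
  imports Defs
begin

text \<open>Since \<open>S\<^sub>Q \<in> F\<close>, the sets whose trace on \<open>S\<^sub>Q\<close> lies in \<open>F\<close> form a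
  \<open>\<sigma>\<close>-algebra on \<open>\<Omega>\<close>; it contains \<open>F\<close>, and by disjointness of the supports the trace
  of a generator \<open>\<Union>\<^sub>R E\<^sub>R\<close> on \<open>S\<^sub>Q\<close> is just \<open>E\<^sub>Q \<in> F\<close>.\<close>

lemma (in sigma_algebra) sigma_sets_Int_in_sets:
  assumes "T \<in> M"
    and generators: "\<And>G. G \<in> \<G> \<Longrightarrow> G \<inter> T \<in> M"
    and "A \<in> sigma_sets \<Omega> \<G>"
  shows "A \<inter> T \<in> M"
  using assms(3)
proof (induction rule: sigma_sets.induct)
  case (Basic G)
  then show ?case by (rule generators)
next
  case Empty
  then show ?case by simp
next
  case (Compl B)
  have "(\<Omega> - B) \<inter> T = T - B \<inter> T"
    using \<open>T \<in> M\<close> sets_into_space by blast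
  then show ?case
    using Compl.IH \<open>T \<in> M\<close> by (simp add: Diff)
next
  case (Union B)
  have "(\<Union>i. B i) \<inter> T = (\<Union>i. B i \<inter> T)" by blast
  moreover have "(\<Union>i. B i \<inter> T) \<in> M"
    using Union.IH by (intro countable_UN) auto
  ultimately show ?case by simp
qed

lemma disjoint_family_on_UN_Int:
  assumes "disjoint_family_on S I" "\<And>i. i \<in> I \<Longrightarrow> E i \<subseteq> S i" "j \<in> I"
  shows "(\<Union>i\<in>I. E i) \<inter> S j = E j"
proof -
  have "E i \<inter> S j = {}" if "i \<in> I" "i \<noteq> j" for i
    using assms that unfolding disjoint_family_on_def by blast
  then show ?thesis
    using assms(2,3) by blast
qed

theorem lemma4p2:
  fixes \<Omega> :: "'a set" and F :: "'a set set" and \<P> \<Q> :: "'a measure set"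
    and S :: "'a measure \<Rightarrow> 'a set"
  assumes "sigma_algebra \<Omega> F"
    and "\<forall>P\<in>\<P>. prob_on \<Omega> F P"
    and "pre_hahn_localizable \<Omega> F \<P>"
    and "localization \<Omega> F \<P> \<Q> S"
    and "\<forall>Q\<in>\<Q>. \<forall>R\<in>\<Q>. Q \<noteq> R \<longrightarrow> S Q \<inter> S R = {}"
    and "A \<in> hahn_extension \<Omega> F \<Q> S"
    and "Q \<in> \<Q>"
  shows "A \<inter> S Q \<in> F"
proof -
  interpret sigma_algebra \<Omega> F by fact
  have S_Q: "S Q \<in> F"
    using assms(4,7) unfolding localization_def by blast
  have disjoint: "disjoint_family_on S \<Q>"
    using assms(5) unfolding disjoint_family_on_def by blast
  have "G \<inter> S Q \<in> F"
    if "G \<in> F \<union> {(\<Union>R\<in>\<Q>. E R) | E. \<forall>R\<in>\<Q>. E R \<in> F \<and> E R \<subseteq> S R}" for G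
    using that
  proof
    assume "G \<in> F"
    then show ?thesis using S_Q by blast
  next
    assume "G \<in> {(\<Union>R\<in>\<Q>. E R) | E. \<forall>R\<in>\<Q>. E R \<in> F \<and> E R \<subseteq> S R}"
    then obtain E where "G = (\<Union>R\<in>\<Q>. E R)" and E: "\<forall>R\<in>\<Q>. E R \<in> F \<and> E R \<subseteq> S R"
      by blast
    then have "G \<inter> S Q = E Q"
      using disjoint_family_on_UN_Int[OF disjoint _ \<open>Q \<in> \<Q>\<close>] by blast
    then show ?thesis using E \<open>Q \<in> \<Q>\<close> by simp
  qed
  then show ?thesis
    using sigma_sets_Int_in_sets[OF S_Q] assms(6) unfolding hahn_extension_def by blast
qed

end
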